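(* Let $\mathbb{F}$ be a field, $0\neq h\in\mathbb{F}[x]$, and let $A=A_h$ be the unital subalgebra of the Weyl algebra $A_1$ generated by $x$ and $\hat y=yh$. Let $\mathsf{D}_2:A\oplus A\to A$, $\mathsf{D}_2(\alpha,\beta)=[\beta,x]+[\hat y,\alpha]-F_\alpha(h)$. Then: (a) $\operatorname{im}\mathsf{D}_2\subseteq\gcd(h,h')A$; (b) if $\operatorname{char}(\mathbb{F})=0$, then $\operatorname{im}\mathsf{D}_2=\gcd(h,h')A$.
   Context: $A_1$ is generated by $x,y$ with $yx-xy=1$, so $\hat yx-x\hat y=h$ in $A$. $[a,b]=ab-ba$. For $\alpha\in A$, $F_\alpha:\mathbb{F}[x]\to A$ is the linear map with $F_\alpha(x^s)=\sum_{\ell=0}^{s-1}x^\ell\alpha x^{s-\ell-1}$ ($F_\alpha(1)=0$). $h'$ is the derivative of $h$; $\gcd$ monic. *)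

theory Defs
  imports "HOL-Computational_Algebra.Computational_Algebra"
begin

text \<open>Concrete model of the Weyl algebra A_1 over a field: an element is written in
normal form  sum_j p_j(x) y^j  (coefficients in F[x] on the left, powers of y on the right),
represented as a polynomial in y with coefficients in F[x], i.e. type  'a poly poly.
Multiplication uses  y^j q(x) = sum_t (j choose t) q^(t)(x) y^(j-t),
which encodes the defining relation  yx - xy = 1.\<close>

definition wmult :: "'a::field poly poly \<Rightarrow> 'a poly poly \<Rightarrow> 'a poly poly" where
  "wmult P Q = (\<Sum>j\<le>degree P. \<Sum>l\<le>degree Q. \<Sum>t\<le>j.
      monom (of_nat (j choose t) * coeff P j * ((pderiv ^^ t) (coeff Q l))) (j - t + l))"

definition wcomm :: "'a::field poly poly \<Rightarrow> 'a poly poly \<Rightarrow> 'a poly poly" where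
  "wcomm a b = wmult a b - wmult b a"

definition Xw :: "'a::field poly poly" where "Xw = monom [:0, 1:] 0"
definition Yw :: "'a::field poly poly" where "Yw = monom 1 1"
definition xpow :: "nat \<Rightarrow> 'a::field poly poly" where "xpow n = monom (monom 1 n) 0"
definition polyw :: "'a::field poly \<Rightarrow> 'a poly poly" where "polyw p = monom p 0"

definition yhat :: "'a::field poly \<Rightarrow> 'a poly poly" where
  "yhat h = wmult Yw (polyw h)"

inductive_set Ah :: "'a::field poly \<Rightarrow> 'a poly poly set" for h where
  scalar: "polyw [:c:] \<in> Ah h"
| genx: "Xw \<in> Ah h"
| geny: "yhat h \<in> Ah h"
| add: "a \<in> Ah h \<Longrightarrow> b \<in> Ah h \<Longrightarrow> a + b \<in> Ah h"
| mult: "a \<in> Ah h \<Longrightarrow> b \<in> Ah h \<Longrightarrow> wmult a b \<in> Ah h"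

definition Fmap :: "'a::field poly poly \<Rightarrow> 'a poly \<Rightarrow> 'a poly poly" where
  "Fmap \<alpha> p = (\<Sum>s\<le>degree p. smult [:coeff p s:]
       (\<Sum>l<s. wmult (wmult (xpow l) \<alpha>) (xpow (s - l - 1))))"

definition D2 :: "'a::field poly \<Rightarrow> 'a poly poly \<Rightarrow> 'a poly poly \<Rightarrow> 'a poly poly" where
  "D2 h \<alpha> \<beta> = wcomm \<beta> Xw + wcomm (yhat h) \<alpha> - Fmap \<alpha> h"

end

theory Submission
  imports Defs
begin

text \<open>Since [yhat, p(x)] = h p'(x), the set hA_h is a two-sided ideal of A_h, and the
commutators [beta, x], [yhat, alpha] and F_alpha(h) - h' alpha all lie in it. Hence im D_2 is
contained in hA_h + h'A_h, which lies in gcd(h, h')A_h.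

In characteristic 0, D_2(0, beta) = [beta, x] is the y-derivative of beta. The j-th
y-coefficient of an element of A_h is divisible by h^j, so the top coefficient of h a is the
derivative of a multiple of yhat^(n+1), and induction on the y-degree puts all of hA_h into
the image. Then h' alpha = [yhat, alpha] - (F_alpha(h) - h' alpha) - D_2(alpha, 0) is in the
image as well, and a Bezout identity u h + v h' = gcd(h, h') gives equality.\<close>

lemma smult_sum_right: "smult c (sum f S) = (\<Sum>x\<in>S. smult c (f x))"
  by (induction S rule: infinite_finite_induct) (simp_all add: smult_add_right)

lemma pderiv_sum: "pderiv (sum f S) = (\<Sum>x\<in>S. pderiv (f x))"
  by (induction S rule: infinite_finite_induct) (simp_all add: pderiv_add)

section \<open>Normal forms in the Weyl algebra\<close>

text \<open>Left multiplication by y on normal forms: y p(x) y^j = p'(x) y^j + p(x) y^(j+1).\<close>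

definition ymult :: "'a::field poly poly \<Rightarrow> 'a poly poly" where
  "ymult f = map_poly pderiv f + pCons 0 f"

lemma coeff_ymult:
  "coeff (ymult f) n = pderiv (coeff f n) + (if n = 0 then 0 else coeff f (n - 1))"
  by (simp add: ymult_def coeff_map_poly coeff_pCons')

lemma ymult_0 [simp]: "ymult 0 = 0"
  by (simp add: poly_eq_iff coeff_ymult)

lemma ymult_add: "ymult (f + g) = ymult f + ymult g"
  by (simp add: poly_eq_iff coeff_ymult pderiv_add)

lemma ymult_diff: "ymult (f - g) = ymult f - ymult g"
  by (simp add: poly_eq_iff coeff_ymult pderiv_diff)

lemma ymult_smult: "ymult (smult q f) = smult (pderiv q) f + smult q (ymult f)"
  by (simp add: poly_eq_iff coeff_ymult pderiv_mult algebra_simps)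

lemma ymult_monom: "ymult (monom c k) = monom (pderiv c) k + monom c (Suc k)"
  by (auto simp add: poly_eq_iff coeff_ymult)

lemma ymult_sum: "ymult (sum f S) = (\<Sum>x\<in>S. ymult (f x))"
  by (induction S rule: infinite_finite_induct) (simp_all add: ymult_add)

lemma funpow_ymult_0 [simp]: "(ymult ^^ j) 0 = 0"
  by (induction j) simp_all

lemma funpow_ymult_add: "(ymult ^^ j) (f + g) = (ymult ^^ j) f + (ymult ^^ j) g"
  by (induction j) (simp_all add: ymult_add)

lemma funpow_ymult_diff: "(ymult ^^ j) (f - g) = (ymult ^^ j) f - (ymult ^^ j) g"
  by (induction j) (simp_all add: ymult_diff)

lemma funpow_ymult_sum: "(ymult ^^ j) (sum f S) = (\<Sum>x\<in>S. (ymult ^^ j) (f x))"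
  by (induction S rule: infinite_finite_induct) (simp_all add: funpow_ymult_add)

lemma funpow_ymult_monom:
  "(ymult ^^ j) (monom q l) = (\<Sum>t\<le>j. monom (of_nat (j choose t) * (pderiv ^^ t) q) (j - t + l))"
proof (induction j)
  case 0
  then show ?case by simp
next
  case (Suc j)
  have "(ymult ^^ Suc j) (monom q l) =
      (\<Sum>t\<le>j. monom (of_nat (j choose t) * (pderiv ^^ Suc t) q) (j - t + l))
      + (\<Sum>t\<le>j. monom (of_nat (j choose t) * (pderiv ^^ t) q) (Suc (j - t + l)))"
    using Suc by (simp add: ymult_sum ymult_monom sum.distrib pderiv_mult)
  also have "(\<Sum>t\<le>j. monom (of_nat (j choose t) * (pderiv ^^ t) q) (Suc (j - t + l))) =
      monom q (Suc (j + l))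
      + (\<Sum>t\<le>j. monom (of_nat (j choose Suc t) * (pderiv ^^ Suc t) q) (j - t + l))"
    by (subst sum.atMost_shift)
      (simp add: Suc_diff_Suc lessThan_Suc_atMost[symmetric] binomial_eq_0)
  finally have "(ymult ^^ Suc j) (monom q l) = monom q (Suc (j + l)) +
      (\<Sum>t\<le>j. monom (of_nat (Suc j choose Suc t) * (pderiv ^^ Suc t) q) (j - t + l))"
    by (simp add: sum.distrib[symmetric] add_monom algebra_simps del: funpow.simps)
  also have "\<dots> = (\<Sum>t\<le>Suc j. monom (of_nat (Suc j choose t) * (pderiv ^^ t) q) (Suc j - t + l))"
    by (subst (2) sum.atMost_shift) (simp del: funpow.simps add: lessThan_Suc_atMost)
  finally show ?case .
qed

lemma funpow_ymult_const: "(ymult ^^ j) (monom [:c:] 0) = monom [:c:] j"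
  by (induction j) (simp_all add: ymult_monom)

lemma wmult_conv_ymult: "wmult P Q = (\<Sum>j\<le>degree P. smult (coeff P j) ((ymult ^^ j) Q))"
proof -
  have "(\<Sum>j\<le>degree P. smult (coeff P j) ((ymult ^^ j) Q)) =
      (\<Sum>j\<le>degree P. smult (coeff P j) ((ymult ^^ j) (\<Sum>l\<le>degree Q. monom (coeff Q l) l)))"
    by (simp add: poly_as_sum_of_monoms)
  also have "\<dots> = wmult P Q"
    unfolding wmult_def
    by (simp add: funpow_ymult_sum funpow_ymult_monom smult_sum_right smult_monom mult_ac)
  finally show ?thesis by simp
qed

lemma wmult_conv_ymult_bound:
  "degree P \<le> N \<Longrightarrow> wmult P Q = (\<Sum>j\<le>N. smult (coeff P j) ((ymult ^^ j) Q))"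
  unfolding wmult_conv_ymult by (rule sum.mono_neutral_left) (auto simp: coeff_eq_0)

lemma wmult_0_left [simp]: "wmult 0 Q = 0"
  by (simp add: wmult_conv_ymult)

lemma wmult_0_right [simp]: "wmult P 0 = 0"
  by (simp add: wmult_conv_ymult)

lemma wmult_add_left: "wmult (P + P') Q = wmult P Q + wmult P' Q"
proof -
  let ?N = "max (degree P) (degree P')"
  have "wmult (P + P') Q = (\<Sum>j\<le>?N. smult (coeff (P + P') j) ((ymult ^^ j) Q))"
    by (rule wmult_conv_ymult_bound) (simp add: degree_add_le)
  also have "\<dots> = wmult P Q + wmult P' Q"
    by (simp add: wmult_conv_ymult_bound[of _ ?N] smult_add_left sum.distrib)
  finally show ?thesis .
qed

lemma wmult_diff_left: "wmult (P - P') Q = wmult P Q - wmult P' Q"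
  using wmult_add_left[of "P - P'" P' Q] by (simp add: algebra_simps)

lemma wmult_sum_left: "wmult (sum P S) Q = (\<Sum>x\<in>S. wmult (P x) Q)"
  by (induction S rule: infinite_finite_induct) (simp_all add: wmult_add_left)

lemma wmult_add_right: "wmult P (Q + Q') = wmult P Q + wmult P Q'"
  by (simp add: wmult_conv_ymult funpow_ymult_add smult_add_right sum.distrib)

lemma wmult_diff_right: "wmult P (Q - Q') = wmult P Q - wmult P Q'"
  by (simp add: wmult_conv_ymult funpow_ymult_diff smult_diff_right sum_subtractf)

lemma wmult_sum_right: "wmult P (sum Q S) = (\<Sum>x\<in>S. wmult P (Q x))"
  by (induction S rule: infinite_finite_induct) (simp_all add: wmult_add_right)

lemma wmult_smult_left: "wmult (smult q P) Q = smult q (wmult P Q)"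
  by (simp add: wmult_conv_ymult_bound[OF degree_smult_le] wmult_conv_ymult smult_sum_right)

lemma wmult_monom_left: "wmult (monom c k) Q = smult c ((ymult ^^ k) Q)"
proof -
  have "wmult (monom c k) Q = (\<Sum>j\<le>k. smult (coeff (monom c k) j) ((ymult ^^ j) Q))"
    by (rule wmult_conv_ymult_bound) (simp add: degree_monom_le)
  also have "\<dots> = (\<Sum>j\<le>k. if j = k then smult c ((ymult ^^ j) Q) else 0)"
    by (rule sum.cong) auto
  finally show ?thesis by simp
qed

lemma ymult_wmult: "ymult (wmult P Q) = wmult (ymult P) Q"
proof -
  have "wmult (ymult P) Q = wmult (ymult (\<Sum>l\<le>degree P. monom (coeff P l) l)) Q"
    by (simp add: poly_as_sum_of_monoms)
  also have "\<dots> = (\<Sum>l\<le>degree P. smult (pderiv (coeff P l)) ((ymult ^^ l) Q)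
      + smult (coeff P l) ((ymult ^^ Suc l) Q))"
    by (simp add: ymult_sum ymult_monom wmult_sum_left wmult_add_left wmult_monom_left)
  also have "\<dots> = ymult (wmult P Q)"
    by (simp add: wmult_conv_ymult ymult_sum ymult_smult)
  finally show ?thesis by simp
qed

lemma wmult_assoc: "wmult (wmult P Q) R = wmult P (wmult Q R)"
proof -
  have funpow_ymult_wmult: "(ymult ^^ j) (wmult Q R) = wmult ((ymult ^^ j) Q) R" for j
    by (induction j) (simp_all add: ymult_wmult)
  show ?thesis
    by (simp add: wmult_conv_ymult[of P] wmult_sum_left wmult_smult_left funpow_ymult_wmult)
qed

lemma wmult_polyw_left: "wmult (polyw p) Q = smult p Q"
  by (simp add: polyw_def wmult_monom_left)

lemma polyw_add: "polyw (p + q) = polyw p + polyw q"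
  by (simp add: polyw_def add_monom)

lemma wmult_polyw_polyw: "wmult (polyw p) (polyw q) = polyw (p * q)"
  unfolding wmult_polyw_left by (simp add: polyw_def smult_monom)

lemma wmult_polyw_const_right: "wmult P (polyw [:c:]) = smult [:c:] P"
proof -
  have "wmult P (polyw [:c:]) = (\<Sum>j\<le>degree P. monom (coeff P j * [:c:]) j)"
    by (simp add: wmult_conv_ymult polyw_def funpow_ymult_const smult_monom)
  also have "\<dots> = smult [:c:] P"
    by (subst (2) poly_as_sum_of_monoms[symmetric]) (simp add: smult_sum_right smult_monom mult.commute)
  finally show ?thesis .
qed

lemma Xw_eq_polyw: "Xw = polyw [:0, 1:]"
  by (simp add: Xw_def polyw_def)

lemma xpow_eq_polyw: "xpow n = polyw (monom 1 n)"
  by (simp add: xpow_def polyw_def)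

lemma yhat_eq: "yhat h = monom (pderiv h) 0 + monom h 1"
  by (simp add: yhat_def Yw_def polyw_def wmult_monom_left ymult_monom)

section \<open>The algebra A_h and its ideal hA_h\<close>

lemma polyw_in_Ah: "polyw p \<in> Ah h"
proof (induction p rule: pCons_induct)
  case 0
  then show ?case using Ah.scalar[of 0 h] by simp
next
  case (pCons a p)
  have "polyw (pCons a p) = polyw [:a:] + wmult Xw (polyw p)"
    by (simp add: Xw_eq_polyw wmult_polyw_polyw polyw_add[symmetric])
  then show ?case using pCons Ah.add Ah.mult Ah.scalar Ah.genx by metis
qed

lemma smult_in_Ah: "a \<in> Ah h \<Longrightarrow> smult q a \<in> Ah h"
  using Ah.mult[OF polyw_in_Ah[of q h]] by (simp add: wmult_polyw_left)

lemma zero_in_Ah: "0 \<in> Ah h"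
  using polyw_in_Ah[of 0 h] by (simp add: polyw_def)

lemma diff_in_Ah: "a \<in> Ah h \<Longrightarrow> b \<in> Ah h \<Longrightarrow> a - b \<in> Ah h"
  using Ah.add[of a h "smult (-1) b"] smult_in_Ah[of b h "-1"] by simp

definition Ah_multiples :: "'a::field poly \<Rightarrow> 'a poly \<Rightarrow> 'a poly poly set" where
  "Ah_multiples h c = {smult c a | a. a \<in> Ah h}"

lemma Ah_multiples_conv_wmult: "Ah_multiples h c = {wmult (polyw c) a | a. a \<in> Ah h}"
  by (simp add: Ah_multiples_def wmult_polyw_left)

lemma zero_in_Ah_multiples: "0 \<in> Ah_multiples h c"
  unfolding Ah_multiples_def using zero_in_Ah[of h] by force

lemma Ah_multiples_add: "a \<in> Ah_multiples h c \<Longrightarrow> b \<in> Ah_multiples h c \<Longrightarrow> a + b \<in> Ah_multiples h c"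
  unfolding Ah_multiples_def by (auto simp: smult_add_right[symmetric] intro: Ah.add)

lemma Ah_multiples_diff: "a \<in> Ah_multiples h c \<Longrightarrow> b \<in> Ah_multiples h c \<Longrightarrow> a - b \<in> Ah_multiples h c"
  unfolding Ah_multiples_def by (auto simp: smult_diff_right[symmetric] intro: diff_in_Ah)

lemma Ah_multiples_uminus: "a \<in> Ah_multiples h c \<Longrightarrow> - a \<in> Ah_multiples h c"
  using Ah_multiples_diff[OF zero_in_Ah_multiples] by fastforce

lemma Ah_multiples_sum:
  "(\<And>x. x \<in> S \<Longrightarrow> f x \<in> Ah_multiples h c) \<Longrightarrow> sum f S \<in> Ah_multiples h c"
  by (induction S rule: infinite_finite_induct) (auto simp: zero_in_Ah_multiples Ah_multiples_add)

lemma smult_in_Ah_multiples: "c dvd q \<Longrightarrow> a \<in> Ah h \<Longrightarrow> smult q a \<in> Ah_multiples h c"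
proof -
  assume "c dvd q" "a \<in> Ah h"
  then obtain k where "smult q a = smult c (smult k a)" "smult k a \<in> Ah h"
    by (auto intro: smult_in_Ah)
  then show ?thesis unfolding Ah_multiples_def by blast
qed

lemma Ah_multiples_smult: "a \<in> Ah_multiples h c \<Longrightarrow> smult q a \<in> Ah_multiples h c"
proof -
  assume "a \<in> Ah_multiples h c"
  then obtain d where "d \<in> Ah h" "smult q a = smult c (smult q d)"
    by (auto simp: Ah_multiples_def mult.commute)
  then show ?thesis unfolding Ah_multiples_def using smult_in_Ah by blast
qed

lemma Ah_multiples_mono: "c dvd c' \<Longrightarrow> Ah_multiples h c' \<subseteq> Ah_multiples h c"
  by (auto simp: Ah_multiples_def[of h c'] intro: smult_in_Ah_multiples)

lemma Ah_multiples_wmult_right: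
  "a \<in> Ah_multiples h c \<Longrightarrow> b \<in> Ah h \<Longrightarrow> wmult a b \<in> Ah_multiples h c"
  unfolding Ah_multiples_def by (auto simp: wmult_smult_left intro: Ah.mult)

lemma wcomm_yhat_polyw: "wcomm (yhat h) (polyw p) = polyw (h * pderiv p)"
  by (simp add: wcomm_def yhat_eq wmult_add_left wmult_monom_left polyw_def ymult_monom
      smult_monom smult_add_right add_monom[symmetric] algebra_simps)

lemma Ah_multiples_wmult_left:
  "a \<in> Ah h \<Longrightarrow> b \<in> Ah_multiples h h \<Longrightarrow> wmult a b \<in> Ah_multiples h h"
proof (induction a arbitrary: b rule: Ah.induct)
  case (scalar c)
  then show ?case by (simp add: wmult_polyw_left Ah_multiples_smult)
next
  case genx
  then show ?case by (simp add: Xw_eq_polyw wmult_polyw_left Ah_multiples_smult)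
next
  case geny
  then obtain d where d: "d \<in> Ah h" "b = smult h d"
    by (auto simp: Ah_multiples_def)
  have "wmult (yhat h) (smult h d) = wmult (wmult (yhat h) (polyw h)) d"
    by (simp add: wmult_assoc wmult_polyw_left)
  also have "\<dots> = smult h (wmult (yhat h) d + smult (pderiv h) d)"
    using wcomm_yhat_polyw[of h h] unfolding wcomm_def diff_eq_eq
    by (simp add: wmult_add_left wmult_polyw_left wmult_smult_left
        smult_add_right wmult_assoc[symmetric])
  finally show ?case
    using d by (auto simp: Ah_multiples_def intro!: Ah.add Ah.mult smult_in_Ah Ah.geny)
next
  case (add a a')
  then show ?case by (simp add: wmult_add_left Ah_multiples_add)
next
  case (mult a a')
  then show ?case by (simp add: wmult_assoc)
qed

section \<open>The image of D_2 lies in gcd(h, h') A_h\<close>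

lemma wcomm_add_left: "wcomm (a + b) c = wcomm a c + wcomm b c"
  by (simp add: wcomm_def wmult_add_left wmult_add_right)

lemma wcomm_wmult_left: "wcomm (wmult a b) c = wmult a (wcomm b c) + wmult (wcomm a c) b"
  by (simp add: wcomm_def wmult_diff_left wmult_diff_right wmult_assoc)

lemma wcomm_swap: "wcomm a b = - wcomm b a"
  by (simp add: wcomm_def)

lemma wcomm_polyw_const: "wcomm (polyw [:c:]) a = 0"
  by (simp add: wcomm_def wmult_polyw_left wmult_polyw_const_right)

lemma wcomm_polyw_polyw: "wcomm (polyw p) (polyw q) = 0"
  by (simp add: wcomm_def wmult_polyw_polyw mult.commute)

lemma polyw_mult_in_Ah_multiples: "polyw (h * q) \<in> Ah_multiples h h"
proof -
  have "polyw (h * q) = smult h (polyw q)" by (simp add: polyw_def smult_monom)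
  then show ?thesis unfolding Ah_multiples_def using polyw_in_Ah by blast
qed

text \<open>By the Leibniz rule, it suffices to commute b past the two generators.\<close>

lemma wcomm_in_Ah_multiples:
  assumes "wcomm Xw b \<in> Ah_multiples h h" "wcomm (yhat h) b \<in> Ah_multiples h h"
  shows "a \<in> Ah h \<Longrightarrow> wcomm a b \<in> Ah_multiples h h"
proof (induction a rule: Ah.induct)
  case (add a a')
  then show ?case by (simp add: wcomm_add_left Ah_multiples_add)
next
  case (mult a a')
  then show ?case
    by (simp add: wcomm_wmult_left Ah_multiples_add Ah_multiples_wmult_left Ah_multiples_wmult_right)
qed (use assms in \<open>simp_all add: wcomm_polyw_const zero_in_Ah_multiples\<close>)

lemma wcomm_polyw_in_Ah_multiples: "a \<in> Ah h \<Longrightarrow> wcomm a (polyw p) \<in> Ah_multiples h h"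
  by (rule wcomm_in_Ah_multiples)
    (simp_all add: Xw_eq_polyw wcomm_polyw_polyw wcomm_yhat_polyw zero_in_Ah_multiples
      polyw_mult_in_Ah_multiples)

lemma wcomm_yhat_in_Ah_multiples: "a \<in> Ah h \<Longrightarrow> wcomm (yhat h) a \<in> Ah_multiples h h"
proof -
  assume "a \<in> Ah h"
  have "wcomm (yhat h) Xw \<in> Ah_multiples h h"
    unfolding Xw_eq_polyw using Ah.geny by (rule wcomm_polyw_in_Ah_multiples)
  then have "wcomm Xw (yhat h) \<in> Ah_multiples h h"
    using Ah_multiples_uminus wcomm_swap by metis
  moreover have "wcomm (yhat h) (yhat h) \<in> Ah_multiples h h"
    by (simp add: wcomm_def zero_in_Ah_multiples)
  ultimately have "wcomm a (yhat h) \<in> Ah_multiples h h"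
    using \<open>a \<in> Ah h\<close> by (rule wcomm_in_Ah_multiples)
  then show ?thesis
    using Ah_multiples_uminus wcomm_swap by metis
qed

text \<open>F_a(x^s) - s x^(s-1) a is the sum of the x^l [a, x^(s-l-1)] for l < s.\<close>

lemma Fmap_minus_pderiv_in_Ah_multiples:
  assumes "a \<in> Ah h"
  shows "Fmap a h - smult (pderiv h) a \<in> Ah_multiples h h"
proof -
  have "pderiv h = (\<Sum>s\<le>degree h. monom (of_nat s * coeff h s) (s - 1))"
    by (subst (1) poly_as_sum_of_monoms[symmetric]) (simp add: pderiv_sum pderiv_monom)
  also have "\<dots> = (\<Sum>s\<le>degree h. \<Sum>l<s. monom (coeff h s) (s - 1))"
    by (simp only: monom_sum[symmetric] sum_constant card_lessThan)
  finally have "Fmap a h - smult (pderiv h) a = (\<Sum>s\<le>degree h. \<Sum>l<s.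
      smult [:coeff h s:] (wmult (wmult (xpow l) a) (xpow (s - l - 1)))
      - smult (monom (coeff h s) (s - 1)) a)"
    by (simp add: Fmap_def smult_sum smult_sum_right sum_subtractf del: sum_constant)
  also have "\<dots> = (\<Sum>s\<le>degree h. \<Sum>l<s.
      smult (monom (coeff h s) l) (wcomm a (xpow (s - l - 1))))"
  proof (intro sum.cong refl)
    fix s l :: nat
    assume "l \<in> {..<s}"
    then have "monom (coeff h s) (s - 1) = monom (coeff h s) l * monom 1 (s - l - 1)"
      by (simp add: mult_monom)
    then show "smult [:coeff h s:] (wmult (wmult (xpow l) a) (xpow (s - l - 1)))
        - smult (monom (coeff h s) (s - 1)) a
        = smult (monom (coeff h s) l) (wcomm a (xpow (s - l - 1)))"
      by (simp add: xpow_eq_polyw wmult_polyw_left wcomm_def wmult_smult_left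
          smult_diff_right smult_monom)
  qed
  also have "\<dots> \<in> Ah_multiples h h"
    using assms by (intro Ah_multiples_sum Ah_multiples_smult)
      (simp add: xpow_eq_polyw wcomm_polyw_in_Ah_multiples)
  finally show ?thesis .
qed

lemma D2_in_Ah_multiples_gcd:
  fixes h :: "'a::field_gcd poly"
  assumes "\<alpha> \<in> Ah h" "\<beta> \<in> Ah h"
  shows "D2 h \<alpha> \<beta> \<in> Ah_multiples h (gcd h (pderiv h))"
proof -
  let ?g = "gcd h (pderiv h)"
  let ?r = "wcomm \<beta> Xw + wcomm (yhat h) \<alpha> - (Fmap \<alpha> h - smult (pderiv h) \<alpha>)"
  have "?r \<in> Ah_multiples h h"
    using assms unfolding Xw_eq_polyw
    by (intro Ah_multiples_add Ah_multiples_diff wcomm_polyw_in_Ah_multiples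
        wcomm_yhat_in_Ah_multiples Fmap_minus_pderiv_in_Ah_multiples)
  then have "?r \<in> Ah_multiples h ?g"
    using Ah_multiples_mono[of ?g h h] by auto
  moreover have "smult (pderiv h) \<alpha> \<in> Ah_multiples h ?g"
    using assms(1) by (rule smult_in_Ah_multiples[OF gcd_dvd2])
  moreover have "D2 h \<alpha> \<beta> = ?r - smult (pderiv h) \<alpha>"
    by (simp add: D2_def)
  ultimately show ?thesis
    by (simp only: Ah_multiples_diff)
qed

section \<open>Characteristic zero: the image of D_2 is gcd(h, h') A_h\<close>

lemma funpow_ymult_Xw: "(ymult ^^ k) Xw = monom [:0, 1:] k + monom (of_nat k) (k - 1)"
proof (induction k)
  case 0
  then show ?case by (simp add: Xw_def)
next
  case (Suc k)
  have "(ymult ^^ Suc k) (Xw :: 'a poly poly) = ymult (monom [:0, 1:] k + monom (of_nat k) (k - 1))"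
    by (simp only: funpow.simps comp_apply Suc.IH)
  also have "\<dots> = monom 1 k + monom [:0, 1:] (Suc k) + monom (of_nat k) (Suc (k - 1))"
    by (simp add: ymult_add ymult_monom pderiv_pCons one_pCons)
  also have "\<dots> = monom [:0, 1:] (Suc k) + monom (of_nat (Suc k)) (Suc k - 1)"
    by (cases k) (simp_all add: add_monom algebra_simps)
  finally show ?case .
qed

lemma wcomm_Xw_eq_pderiv: "wcomm P Xw = pderiv P"
proof -
  have monom_case: "wcomm (monom c k) Xw = pderiv (monom c k)" for c :: "'a poly" and k
    by (simp add: wcomm_def wmult_monom_left funpow_ymult_Xw
        wmult_polyw_left[of "[:0, 1:]", folded Xw_eq_polyw] smult_monom pderiv_monom smult_add_right algebra_simps)
  have "wcomm P Xw = (\<Sum>k\<le>degree P. wcomm (monom (coeff P k) k) Xw)"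
    by (subst (1) poly_as_sum_of_monoms[symmetric])
      (simp add: wcomm_def wmult_sum_left wmult_sum_right sum_subtractf)
  also have "\<dots> = pderiv P"
    by (subst (2) poly_as_sum_of_monoms[symmetric]) (simp add: monom_case pderiv_sum)
  finally show ?thesis .
qed

lemma pderiv_in_Ah_multiples: "\<beta> \<in> Ah h \<Longrightarrow> pderiv \<beta> \<in> Ah_multiples h h"
  using wcomm_polyw_in_Ah_multiples[of \<beta> h "[:0, 1:]"]
  by (simp flip: Xw_eq_polyw add: wcomm_Xw_eq_pderiv)

definition coeffs_pow_dvd :: "'a::field poly \<Rightarrow> 'a poly poly \<Rightarrow> bool" where
  "coeffs_pow_dvd h P \<longleftrightarrow> (\<forall>k. h ^ k dvd coeff P k)"

lemma coeffs_pow_dvd_add: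
  "coeffs_pow_dvd h P \<Longrightarrow> coeffs_pow_dvd h Q \<Longrightarrow> coeffs_pow_dvd h (P + Q)"
  by (simp add: coeffs_pow_dvd_def)

lemma coeffs_pow_dvd_sum:
  "(\<And>x. x \<in> S \<Longrightarrow> coeffs_pow_dvd h (f x)) \<Longrightarrow> coeffs_pow_dvd h (sum f S)"
  by (induction S rule: infinite_finite_induct) (auto simp: coeffs_pow_dvd_def)

lemma coeffs_pow_dvd_monom: "h ^ n dvd c \<Longrightarrow> coeffs_pow_dvd h (monom c n)"
  by (simp add: coeffs_pow_dvd_def)

lemma pderiv_power_dvd:
  fixes h :: "'a::idom poly"
  assumes "h ^ Suc n dvd r"
  shows "h ^ n dvd pderiv r"
proof -
  obtain s where s: "r = h ^ Suc n * s"
    using assms by blast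
  have "pderiv r = h ^ Suc n * pderiv s + s * (smult (of_nat (Suc n)) (h ^ n) * pderiv h)"
    unfolding s by (simp only: pderiv_mult pderiv_power_Suc)
  moreover have "h ^ n dvd h ^ Suc n * pderiv s"
    by (intro dvd_mult2 le_imp_power_dvd) simp
  moreover have "h ^ n dvd s * (smult (of_nat (Suc n)) (h ^ n) * pderiv h)"
    by (simp only: mult_smult_left) (intro dvd_mult dvd_smult dvd_mult2 dvd_refl)
  ultimately show ?thesis by simp
qed

lemma higher_pderiv_power_dvd:
  fixes h :: "'a::idom poly"
  shows "h ^ (m + t) dvd r \<Longrightarrow> h ^ m dvd (pderiv ^^ t) r"
proof (induction t arbitrary: r)
  case 0
  then show ?case by simp
next
  case (Suc t)
  then have "h ^ m dvd (pderiv ^^ t) (pderiv r)"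
    by (intro Suc.IH pderiv_power_dvd) simp
  then show ?case by (simp add: funpow_Suc_right del: funpow.simps)
qed

lemma coeffs_pow_dvd_wmult:
  assumes P: "coeffs_pow_dvd h P" and Q: "coeffs_pow_dvd h Q"
  shows "coeffs_pow_dvd h (wmult P Q)"
  unfolding wmult_def
proof (intro coeffs_pow_dvd_sum coeffs_pow_dvd_monom)
  fix j l t :: nat
  assume "t \<in> {..j}"
  have dP: "h ^ j dvd coeff P j" and dQ: "h ^ l dvd coeff Q l"
    using P Q by (auto simp: coeffs_pow_dvd_def)
  show "h ^ (j - t + l) dvd of_nat (j choose t) * coeff P j * (pderiv ^^ t) (coeff Q l)"
  proof (cases "t \<le> l")
    case True
    have "h ^ (l - t) dvd (pderiv ^^ t) (coeff Q l)"
      using dQ True by (intro higher_pderiv_power_dvd) simp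
    with dP have "h ^ j * h ^ (l - t) dvd coeff P j * (pderiv ^^ t) (coeff Q l)"
      by (rule mult_dvd_mono)
    then show ?thesis
      using True \<open>t \<in> {..j}\<close> by (simp add: power_add[symmetric] mult.assoc)
  next
    case False
    then have "h ^ (j - t + l) dvd h ^ j"
      using \<open>t \<in> {..j}\<close> by (intro le_imp_power_dvd) simp
    then have "h ^ (j - t + l) dvd coeff P j"
      using dP by (rule dvd_trans)
    then show ?thesis by (simp add: mult.assoc)
  qed
qed

lemma Ah_imp_coeffs_pow_dvd: "a \<in> Ah h \<Longrightarrow> coeffs_pow_dvd h a"
proof (induction a rule: Ah.induct)
  case (scalar c)
  then show ?case by (simp add: polyw_def coeffs_pow_dvd_monom)
next
  case genx
  then show ?case by (simp add: Xw_def coeffs_pow_dvd_monom)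
next
  case geny
  then show ?case by (simp add: yhat_eq coeffs_pow_dvd_add coeffs_pow_dvd_monom)
qed (simp_all add: coeffs_pow_dvd_add coeffs_pow_dvd_wmult)

primrec yhat_pow :: "'a::field poly \<Rightarrow> nat \<Rightarrow> 'a poly poly" where
  "yhat_pow h 0 = polyw 1"
| "yhat_pow h (Suc n) = wmult (yhat h) (yhat_pow h n)"

lemma yhat_pow_in_Ah: "yhat_pow h n \<in> Ah h"
  by (induction n) (simp_all add: polyw_in_Ah Ah.mult Ah.geny)

lemma coeff_wmult_yhat:
  "coeff (wmult (yhat h) Q) k =
    pderiv h * coeff Q k + h * (pderiv (coeff Q k) + (if k = 0 then 0 else coeff Q (k - 1)))"
  by (simp add: yhat_eq wmult_add_left wmult_monom_left coeff_ymult)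

lemma yhat_pow_leading: "degree (yhat_pow h n) \<le> n \<and> coeff (yhat_pow h n) n = h ^ n"
proof (induction n)
  case 0
  then show ?case by (simp add: polyw_def)
next
  case (Suc n)
  then show ?case
    by (auto simp: coeff_wmult_yhat coeff_eq_0 intro: degree_le)
qed

text \<open>The witness is a scalar multiple of yhat^(n+1), whose top coefficient is h^(n+1).\<close>

lemma pderiv_Ah_matches_top_coeffs:
  fixes h :: "'a::field poly"
  assumes "CHAR('a) = 0" "a \<in> Ah h" "degree a \<le> n"
  shows "\<exists>\<beta>\<in>Ah h. \<forall>k\<ge>n. coeff (smult h a - pderiv \<beta>) k = 0"
proof -
  obtain c where c: "coeff a n = h ^ n * c"
    using Ah_imp_coeffs_pow_dvd[OF assms(2)] by (auto simp: coeffs_pow_dvd_def)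
  have Suc_n_nonzero: "(of_nat (Suc n) :: 'a) \<noteq> 0"
    using assms(1) by (subst of_nat_eq_0_iff_char_dvd) simp
  define \<beta> where "\<beta> = smult (smult (inverse (of_nat (Suc n))) c) (yhat_pow h (Suc n))"
  have "\<beta> \<in> Ah h"
    unfolding \<beta>_def by (intro smult_in_Ah yhat_pow_in_Ah)
  moreover have "coeff (smult h a - pderiv \<beta>) k = 0" if "k \<ge> n" for k
  proof (cases "k = n")
    case True
    have "coeff (pderiv \<beta>) n = of_nat (Suc n) * (smult (inverse (of_nat (Suc n))) c * h ^ Suc n)"
      using yhat_pow_leading[of h "Suc n"] by (simp add: \<beta>_def coeff_pderiv)
    also have "\<dots> = h * coeff a n"
      by (simp only: of_nat_mult_conv_smult mult_smult_left smult_smult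
          right_inverse[OF Suc_n_nonzero] c) (simp add: ac_simps)
    finally show ?thesis using True by simp
  next
    case False
    with that have "coeff a k = 0" "coeff (yhat_pow h (Suc n)) (Suc k) = 0"
      using assms(3) yhat_pow_leading[of h "Suc n"] by (auto intro: coeff_eq_0)
    then show ?thesis by (simp add: \<beta>_def coeff_pderiv)
  qed
  ultimately show ?thesis by blast
qed

lemma exists_Ah_pderiv_eq_smult:
  fixes h :: "'a::field poly"
  assumes "CHAR('a) = 0" "h \<noteq> 0" "a \<in> Ah h"
  shows "\<exists>\<beta>\<in>Ah h. pderiv \<beta> = smult h a"
proof -
  have "\<forall>a\<in>Ah h. (\<forall>k\<ge>n. coeff a k = 0) \<longrightarrow> (\<exists>\<beta>\<in>Ah h. pderiv \<beta> = smult h a)" for n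
  proof (induction n)
    case 0
    show ?case
    proof (intro ballI impI)
      fix a :: "'a poly poly"
      assume "\<forall>k\<ge>0. coeff a k = 0"
      then have "a = 0" by (simp add: poly_eq_iff)
      then show "\<exists>\<beta>\<in>Ah h. pderiv \<beta> = smult h a" using zero_in_Ah by force
    qed
  next
    case (Suc n)
    show ?case
    proof (intro ballI impI)
      fix a
      assume a: "a \<in> Ah h" "\<forall>k\<ge>Suc n. coeff a k = 0"
      have "degree a \<le> n"
        using a(2) by (intro degree_le) auto
      then obtain \<beta> where \<beta>: "\<beta> \<in> Ah h" "\<forall>k\<ge>n. coeff (smult h a - pderiv \<beta>) k = 0"
        using pderiv_Ah_matches_top_coeffs[OF assms(1) a(1)] by blast
      have "smult h a - pderiv \<beta> \<in> Ah_multiples h h"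
        using a(1) \<beta>(1) by (intro Ah_multiples_diff smult_in_Ah_multiples pderiv_in_Ah_multiples) simp_all
      then obtain a' where a': "a' \<in> Ah h" "smult h a - pderiv \<beta> = smult h a'"
        by (auto simp: Ah_multiples_def)
      with \<beta>(2) assms(2) have "\<forall>k\<ge>n. coeff a' k = 0"
        by simp
      with Suc.IH a'(1) obtain \<beta>' where "\<beta>' \<in> Ah h" "pderiv \<beta>' = smult h a'"
        by blast
      then have "pderiv (\<beta> + \<beta>') = smult h a"
        using a'(2) by (simp add: pderiv_add algebra_simps)
      then show "\<exists>\<beta>\<in>Ah h. pderiv \<beta> = smult h a"
        using Ah.add[OF \<beta>(1) \<open>\<beta>' \<in> Ah h\<close>] by blast
    qed
  qed
  then show ?thesis
    using assms(3) by (meson Suc_le_eq coeff_eq_0)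
qed

definition D2_image :: "'a::field poly \<Rightarrow> 'a poly poly set" where
  "D2_image h = {D2 h \<alpha> \<beta> | \<alpha> \<beta>. \<alpha> \<in> Ah h \<and> \<beta> \<in> Ah h}"

lemma D2_diff: "D2 h (\<alpha> - \<alpha>') (\<beta> - \<beta>') = D2 h \<alpha> \<beta> - D2 h \<alpha>' \<beta>'"
  by (simp add: D2_def Fmap_def wcomm_def wmult_diff_left wmult_diff_right smult_diff_right
      sum_subtractf)

lemma D2_image_diff: "u \<in> D2_image h \<Longrightarrow> v \<in> D2_image h \<Longrightarrow> u - v \<in> D2_image h"
proof -
  assume "u \<in> D2_image h" "v \<in> D2_image h"
  then obtain \<alpha> \<beta> \<alpha>' \<beta>' where
    "u - v = D2 h (\<alpha> - \<alpha>') (\<beta> - \<beta>')" "\<alpha> \<in> Ah h" "\<beta> \<in> Ah h" "\<alpha>' \<in> Ah h" "\<beta>' \<in> Ah h"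
    unfolding D2_image_def by (auto simp: D2_diff)
  then show ?thesis
    unfolding D2_image_def by (blast intro: diff_in_Ah)
qed

lemma zero_in_D2_image: "0 \<in> D2_image h"
proof -
  have "0 = D2 h 0 0"
    by (simp add: D2_def Fmap_def wcomm_def)
  then show ?thesis
    unfolding D2_image_def using zero_in_Ah by blast
qed

lemma D2_image_add: "u \<in> D2_image h \<Longrightarrow> v \<in> D2_image h \<Longrightarrow> u + v \<in> D2_image h"
  using D2_image_diff[of u h "0 - v"] D2_image_diff[OF zero_in_D2_image, of v] by simp

lemma Ah_multiples_h_subset_D2_image:
  fixes h :: "'a::field poly"
  assumes "CHAR('a) = 0" "h \<noteq> 0"
  shows "Ah_multiples h h \<subseteq> D2_image h"
proof
  fix u
  assume "u \<in> Ah_multiples h h"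
  then obtain a where a: "a \<in> Ah h" "u = smult h a"
    by (auto simp: Ah_multiples_def)
  obtain \<beta> where "\<beta> \<in> Ah h" "pderiv \<beta> = smult h a"
    using exists_Ah_pderiv_eq_smult[OF assms a(1)] by blast
  moreover have "pderiv \<beta> = D2 h 0 \<beta>"
    by (simp add: D2_def Fmap_def wcomm_def flip: wcomm_Xw_eq_pderiv)
  ultimately have "u = D2 h 0 \<beta>"
    using a(2) by simp
  then show "u \<in> D2_image h"
    unfolding D2_image_def using zero_in_Ah \<open>\<beta> \<in> Ah h\<close> by blast
qed

lemma smult_pderiv_in_D2_image:
  fixes h :: "'a::field poly"
  assumes "CHAR('a) = 0" "h \<noteq> 0" "a \<in> Ah h"
  shows "smult (pderiv h) a \<in> D2_image h"
proof -
  have "wcomm (yhat h) a - (Fmap a h - smult (pderiv h) a) \<in> D2_image h"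
    using Ah_multiples_h_subset_D2_image[OF assms(1,2)] assms(3)
    by (blast intro: Ah_multiples_diff wcomm_yhat_in_Ah_multiples Fmap_minus_pderiv_in_Ah_multiples)
  moreover have "D2 h a 0 \<in> D2_image h"
    unfolding D2_image_def using assms(3) zero_in_Ah by blast
  ultimately have "wcomm (yhat h) a - (Fmap a h - smult (pderiv h) a) - D2 h a 0 \<in> D2_image h"
    by (rule D2_image_diff)
  also have "wcomm (yhat h) a - (Fmap a h - smult (pderiv h) a) - D2 h a 0 = smult (pderiv h) a"
    by (simp add: D2_def wcomm_def)
  finally show ?thesis .
qed

lemma Ah_multiples_gcd_subset_D2_image:
  fixes h :: "'a::field_gcd poly"
  assumes "CHAR('a) = 0" "h \<noteq> 0"
  shows "Ah_multiples h (gcd h (pderiv h)) \<subseteq> D2_image h"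
proof
  fix u
  assume "u \<in> Ah_multiples h (gcd h (pderiv h))"
  then obtain a where a: "a \<in> Ah h" "u = smult (gcd h (pderiv h)) a"
    by (auto simp: Ah_multiples_def)
  obtain r s where "r * h + s * pderiv h = gcd h (pderiv h)"
    using bezout_coefficients_fst_snd by blast
  then have "u = smult h (smult r a) + smult (pderiv h) (smult s a)"
    using a by (simp add: smult_add_left[symmetric] ac_simps)
  also have "\<dots> \<in> D2_image h"
  proof (rule D2_image_add)
    have "smult h (smult r a) \<in> Ah_multiples h h"
      unfolding Ah_multiples_def using smult_in_Ah[OF a(1)] by blast
    then show "smult h (smult r a) \<in> D2_image h"
      using Ah_multiples_h_subset_D2_image[OF assms] by blast
    show "smult (pderiv h) (smult s a) \<in> D2_image h"
      using assms a(1) by (intro smult_pderiv_in_D2_image smult_in_Ah)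
  qed
  finally show "u \<in> D2_image h" .
qed

theorem proposition3p3:
  fixes h :: "'a::field_gcd poly"
  assumes "h \<noteq> 0"
  shows "{D2 h \<alpha> \<beta> | \<alpha> \<beta>. \<alpha> \<in> Ah h \<and> \<beta> \<in> Ah h}
           \<subseteq> {wmult (polyw (gcd h (pderiv h))) a | a. a \<in> Ah h}
         \<and> (CHAR('a) = 0 \<longrightarrow>
            {D2 h \<alpha> \<beta> | \<alpha> \<beta>. \<alpha> \<in> Ah h \<and> \<beta> \<in> Ah h}
              = {wmult (polyw (gcd h (pderiv h))) a | a. a \<in> Ah h})"
proof -
  have "D2_image h \<subseteq> Ah_multiples h (gcd h (pderiv h))"
    using D2_in_Ah_multiples_gcd by (auto simp: D2_image_def)
  moreover have "Ah_multiples h (gcd h (pderiv h)) \<subseteq> D2_image h" if "CHAR('a) = 0"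
    using that assms by (rule Ah_multiples_gcd_subset_D2_image)
  ultimately show ?thesis
    unfolding D2_image_def[symmetric] Ah_multiples_conv_wmult[symmetric] by (simp add: subset_antisym)
qed

end
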